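(* Let $\mathcal K$ be a 2-category, let $(V,\psi),(W,\phi):(t,\mu,\eta)\to(t',\mu',\eta')$ be 1-cells in $\mathrm{EM}^w(\mathcal K)$ and let $\omega:V\Rightarrow W$ be a 2-cell in $\mathcal K$. (1) The following are equivalent: (i) $\omega t\ast\psi\ast\eta'V$ is a 2-cell $(V,\psi)\Rightarrow(W,\phi)$ in $\mathrm{EM}^w(\mathcal K)$; (ii) $\omega t\ast\psi=W\mu\ast\phi t\ast t'\omega t\ast t'\psi\ast t'\eta'V$; (iii) $W\mu\ast\phi t\ast\eta'Wt\ast\omega t\ast\psi\ast\eta'V=\omega t\ast\psi\ast\eta'V$ and $W\mu\ast\phi t\ast\eta'Wt\ast\omega t\ast\psi=W\mu\ast\phi t\ast t'\omega t\ast t'\psi\ast t'\eta'V$. (2) The following are equivalent: (i) $\phi\ast\eta'W\ast\omega$ is a 2-cell $(V,\psi)\Rightarrow(W,\phi)$ in $\mathrm{EM}^w(\mathcal K)$; (ii) $\phi\ast t'\omega=W\mu\ast\phi t\ast\eta'Wt\ast\omega t\ast\psi$; (iii) $W\mu\ast\phi t\ast\eta'Wt\ast\omega t\ast\psi\ast\eta'V=\phi\ast\eta'W\ast\omega$ and $W\mu\ast\phi t\ast\eta'Wt\ast\omega t\ast\psi=W\mu\ast\phi t\ast t'\omega t\ast t'\psi\ast t'\eta'V$. (3) The following are equivalent: (i) $\phi\ast t'\omega=\omega t\ast\psi$; (ii) both $\phi\ast\eta'W\ast\omega$ and $\omega t\ast\psi\ast\eta'V$ are 2-cells $(V,\psi)\Rightarrow(W,\phi)$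 in $\mathrm{EM}^w(\mathcal K)$. Moreover, when these hold, $\phi\ast\eta'W\ast\omega=\omega t\ast\psi\ast\eta'V$.
   Context: Conventions in a 2-category $\mathcal K$: horizontal composition and whiskering by juxtaposition in the order of functor composition ($V:k\to k'$, $V':k'\to k''$ give $V'V$); identity 1-cell of $k$ written $k$, identity 2-cell of $V$ written $V$; vertical composition $\ast$ with $\alpha\ast\beta$ meaning $\beta$ then $\alpha$. A monad $(t,\mu,\eta)$ on $k$: $t:k\to k$, $\mu:tt\Rightarrow t$, $\eta:k\Rightarrow t$, $\mu\ast\mu t=\mu\ast t\mu$, $\mu\ast\eta t=t=\mu\ast t\eta$. The 2-category $\mathrm{EM}^w(\mathcal K)$: 0-cells are monads in $\mathcal K$; a 1-cell $(t,\mu,\eta)\to(t',\mu',\eta')$ ($t$ on $k$, $t'$ on $k'$) is a pair $(V,\psi)$, $V:k\to k'$, $\psi:t'V\Rightarrow Vt$, with $V\mu\ast\psi t\ast t'\psi=\psi\ast\mu'V$; a 2-cell $(V,\psi)\Rightarrow(W,\phi)$ is a 2-cell $\varrho:V\Rightarrow Wt$ of $\mathcal K$ with (a) $W\mu\ast\varrho t\ast\psi=W\mu\ast\phi t\ast t'\varrho$ and (b) $\varrho=W\mu\ast\phi t\ast\eta'Wt\ast\varrho$. *)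

theory Defs
  imports Main
begin

text \<open>A (strict) 2-category, presented as a partial algebra.
  0-cells of type 'o, 1-cells of type 'a, 2-cells of type 'c.
  cmp1 g f is g after f (written gf in the paper), hcmp b a is the horizontal
  composite of b after a, vcmp b a is the vertical composite "b * a" (a first, then b).\<close>

record ('o, 'a, 'c) twocat =
  Ob   :: "'o set"
  Arr1 :: "'a set"
  src1 :: "'a \<Rightarrow> 'o"
  trg1 :: "'a \<Rightarrow> 'o"
  idc  :: "'o \<Rightarrow> 'a"
  cmp1 :: "'a \<Rightarrow> 'a \<Rightarrow> 'a"
  Arr2 :: "'c set"
  dom2 :: "'c \<Rightarrow> 'a"
  cod2 :: "'c \<Rightarrow> 'a"
  id2  :: "'a \<Rightarrow> 'c"
  vcmp :: "'c \<Rightarrow> 'c \<Rightarrow> 'c"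
  hcmp :: "'c \<Rightarrow> 'c \<Rightarrow> 'c"

definition two_category :: "('o, 'a, 'c) twocat \<Rightarrow> bool" where
  "two_category K \<longleftrightarrow>
    (\<forall>f\<in>Arr1 K. src1 K f \<in> Ob K \<and> trg1 K f \<in> Ob K) \<and>
    (\<forall>x\<in>Ob K. idc K x \<in> Arr1 K \<and> src1 K (idc K x) = x \<and> trg1 K (idc K x) = x) \<and>
    (\<forall>f\<in>Arr1 K. \<forall>g\<in>Arr1 K. src1 K g = trg1 K f \<longrightarrow>
        cmp1 K g f \<in> Arr1 K \<and> src1 K (cmp1 K g f) = src1 K f \<and> trg1 K (cmp1 K g f) = trg1 K g) \<and>
    (\<forall>f\<in>Arr1 K. \<forall>g\<in>Arr1 K. \<forall>h\<in>Arr1 K. src1 K g = trg1 K f \<and> src1 K h = trg1 K g \<longrightarrow>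
        cmp1 K h (cmp1 K g f) = cmp1 K (cmp1 K h g) f) \<and>
    (\<forall>f\<in>Arr1 K. cmp1 K (idc K (trg1 K f)) f = f \<and> cmp1 K f (idc K (src1 K f)) = f) \<and>
    (\<forall>a\<in>Arr2 K. dom2 K a \<in> Arr1 K \<and> cod2 K a \<in> Arr1 K \<and>
        src1 K (dom2 K a) = src1 K (cod2 K a) \<and> trg1 K (dom2 K a) = trg1 K (cod2 K a)) \<and>
    (\<forall>f\<in>Arr1 K. id2 K f \<in> Arr2 K \<and> dom2 K (id2 K f) = f \<and> cod2 K (id2 K f) = f) \<and>
    (\<forall>a\<in>Arr2 K. \<forall>b\<in>Arr2 K. cod2 K a = dom2 K b \<longrightarrow>
        vcmp K b a \<in> Arr2 K \<and> dom2 K (vcmp K b a) = dom2 K a \<and> cod2 K (vcmp K b a) = cod2 K b) \<and>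
    (\<forall>a\<in>Arr2 K. \<forall>b\<in>Arr2 K. \<forall>c\<in>Arr2 K. cod2 K a = dom2 K b \<and> cod2 K b = dom2 K c \<longrightarrow>
        vcmp K c (vcmp K b a) = vcmp K (vcmp K c b) a) \<and>
    (\<forall>a\<in>Arr2 K. vcmp K (id2 K (cod2 K a)) a = a \<and> vcmp K a (id2 K (dom2 K a)) = a) \<and>
    (\<forall>a\<in>Arr2 K. \<forall>b\<in>Arr2 K. src1 K (dom2 K b) = trg1 K (dom2 K a) \<longrightarrow>
        hcmp K b a \<in> Arr2 K \<and> dom2 K (hcmp K b a) = cmp1 K (dom2 K b) (dom2 K a) \<and>
        cod2 K (hcmp K b a) = cmp1 K (cod2 K b) (cod2 K a)) \<and>
    (\<forall>a\<in>Arr2 K. \<forall>b\<in>Arr2 K. \<forall>c\<in>Arr2 K.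
        src1 K (dom2 K b) = trg1 K (dom2 K a) \<and> src1 K (dom2 K c) = trg1 K (dom2 K b) \<longrightarrow>
        hcmp K c (hcmp K b a) = hcmp K (hcmp K c b) a) \<and>
    (\<forall>a\<in>Arr2 K. hcmp K (id2 K (idc K (trg1 K (dom2 K a)))) a = a \<and>
        hcmp K a (id2 K (idc K (src1 K (dom2 K a)))) = a) \<and>
    (\<forall>f\<in>Arr1 K. \<forall>g\<in>Arr1 K. src1 K g = trg1 K f \<longrightarrow>
        hcmp K (id2 K g) (id2 K f) = id2 K (cmp1 K g f)) \<and>
    (\<forall>a\<in>Arr2 K. \<forall>a'\<in>Arr2 K. \<forall>b\<in>Arr2 K. \<forall>b'\<in>Arr2 K.
        cod2 K a = dom2 K a' \<and> cod2 K b = dom2 K b' \<and> src1 K (dom2 K b) = trg1 K (dom2 K a) \<longrightarrow>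
        hcmp K (vcmp K b' b) (vcmp K a' a) = vcmp K (hcmp K b' a') (hcmp K b a))"

text \<open>Whiskering: wl K V a is "V a" (V after a); wr K a V is "a V" (a after V).\<close>
definition wl :: "('o, 'a, 'c) twocat \<Rightarrow> 'a \<Rightarrow> 'c \<Rightarrow> 'c" where
  "wl K V a = hcmp K (id2 K V) a"
definition wr :: "('o, 'a, 'c) twocat \<Rightarrow> 'c \<Rightarrow> 'a \<Rightarrow> 'c" where
  "wr K a V = hcmp K a (id2 K V)"

definition cell2 :: "('o, 'a, 'c) twocat \<Rightarrow> 'c \<Rightarrow> 'a \<Rightarrow> 'a \<Rightarrow> bool" where
  "cell2 K a V W \<longleftrightarrow> a \<in> Arr2 K \<and> dom2 K a = V \<and> cod2 K a = W"

definition monad :: "('o, 'a, 'c) twocat \<Rightarrow> 'o \<Rightarrow> 'a \<Rightarrow> 'c \<Rightarrow> 'c \<Rightarrow> bool" where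
  "monad K k t mu eta \<longleftrightarrow>
    k \<in> Ob K \<and> t \<in> Arr1 K \<and> src1 K t = k \<and> trg1 K t = k \<and>
    cell2 K mu (cmp1 K t t) t \<and> cell2 K eta (idc K k) t \<and>
    vcmp K mu (wr K mu t) = vcmp K mu (wl K t mu) \<and>
    vcmp K mu (wr K eta t) = id2 K t \<and> vcmp K mu (wl K t eta) = id2 K t"

definition em_1cell :: "('o, 'a, 'c) twocat \<Rightarrow> 'o \<Rightarrow> 'a \<Rightarrow> 'c \<Rightarrow> 'c \<Rightarrow>
    'o \<Rightarrow> 'a \<Rightarrow> 'c \<Rightarrow> 'c \<Rightarrow> 'a \<Rightarrow> 'c \<Rightarrow> bool" where
  "em_1cell K k t mu eta k' t' mu' eta' V psi \<longleftrightarrow>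
    V \<in> Arr1 K \<and> src1 K V = k \<and> trg1 K V = k' \<and>
    cell2 K psi (cmp1 K t' V) (cmp1 K V t) \<and>
    vcmp K (wl K V mu) (vcmp K (wr K psi t) (wl K t' psi)) = vcmp K psi (wr K mu' V)"

definition em_2cell :: "('o, 'a, 'c) twocat \<Rightarrow> 'a \<Rightarrow> 'c \<Rightarrow> 'c \<Rightarrow> 'a \<Rightarrow> 'c \<Rightarrow> 'c \<Rightarrow>
    'a \<Rightarrow> 'c \<Rightarrow> 'a \<Rightarrow> 'c \<Rightarrow> 'c \<Rightarrow> bool" where
  "em_2cell K t mu eta t' mu' eta' V psi W phi rho \<longleftrightarrow>
    cell2 K rho V (cmp1 K W t) \<and>
    vcmp K (wl K W mu) (vcmp K (wr K rho t) psi) =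
      vcmp K (wl K W mu) (vcmp K (wr K phi t) (wl K t' rho)) \<and>
    rho = vcmp K (wl K W mu) (vcmp K (wr K phi t) (vcmp K (wr K eta' (cmp1 K W t)) rho))"

end

theory Submission
  imports Defs
begin

text \<open>For a 2-cell x : X \<Rightarrow> W t write proj x = W\<mu> * \<phi>t * \<eta>'Wt * x and
  act x = W\<mu> * \<phi>t * t'x. A 2-cell \<rho> : V \<Rightarrow> W t lies in EM^w(K) iff
  W\<mu> * \<rho>t * \<psi> = act \<rho> and \<rho> = proj \<rho>. Naturality of \<eta>' gives
  proj x = act x * \<eta>'X, and the monad laws together with the axiom of (W, \<phi>) give
  proj (act x) = act x and act (proj x) = act x. Put A = \<omega>t * \<psi> and B = \<phi> * t'\<omega>, so the two
  candidate 2-cells are A * \<eta>'V and B * \<eta>'V (the latter by naturality of \<eta>'). The axiom of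
  (V, \<psi>) gives W\<mu> * (A * \<eta>'V)t * \<psi> = A, while W\<mu> * (B * \<eta>'V)t * \<psi> = proj A,
  act (B * \<eta>'V) = B and proj B = B.\<close>

locale two_cat =
  fixes K :: "('o, 'a, 'c) twocat"
  assumes two_category: "two_category K"
begin

lemma src1_in_Ob: "f \<in> Arr1 K \<Longrightarrow> src1 K f \<in> Ob K"
  and trg1_in_Ob: "f \<in> Arr1 K \<Longrightarrow> trg1 K f \<in> Ob K"
  and idc_in_Arr1: "x \<in> Ob K \<Longrightarrow> idc K x \<in> Arr1 K"
  and src1_idc: "x \<in> Ob K \<Longrightarrow> src1 K (idc K x) = x"
  and trg1_idc: "x \<in> Ob K \<Longrightarrow> trg1 K (idc K x) = x"
  and cmp1_in_Arr1: "\<lbrakk>f \<in> Arr1 K; g \<in> Arr1 K; src1 K g = trg1 K f\<rbrakk> \<Longrightarrow> cmp1 K g f \<in> Arr1 K"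
  and src1_cmp1: "\<lbrakk>f \<in> Arr1 K; g \<in> Arr1 K; src1 K g = trg1 K f\<rbrakk> \<Longrightarrow> src1 K (cmp1 K g f) = src1 K f"
  and trg1_cmp1: "\<lbrakk>f \<in> Arr1 K; g \<in> Arr1 K; src1 K g = trg1 K f\<rbrakk> \<Longrightarrow> trg1 K (cmp1 K g f) = trg1 K g"
  and cmp1_assoc: "\<lbrakk>f \<in> Arr1 K; g \<in> Arr1 K; h \<in> Arr1 K; src1 K g = trg1 K f; src1 K h = trg1 K g\<rbrakk>
      \<Longrightarrow> cmp1 K (cmp1 K h g) f = cmp1 K h (cmp1 K g f)"
  and cmp1_idc_left: "\<lbrakk>f \<in> Arr1 K; trg1 K f = x\<rbrakk> \<Longrightarrow> cmp1 K (idc K x) f = f"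
  and cmp1_idc_right: "\<lbrakk>f \<in> Arr1 K; src1 K f = x\<rbrakk> \<Longrightarrow> cmp1 K f (idc K x) = f"
  and dom2_in_Arr1: "a \<in> Arr2 K \<Longrightarrow> dom2 K a \<in> Arr1 K"
  and cod2_in_Arr1: "a \<in> Arr2 K \<Longrightarrow> cod2 K a \<in> Arr1 K"
  and src1_cod2: "a \<in> Arr2 K \<Longrightarrow> src1 K (cod2 K a) = src1 K (dom2 K a)"
  and trg1_cod2: "a \<in> Arr2 K \<Longrightarrow> trg1 K (cod2 K a) = trg1 K (dom2 K a)"
  and id2_in_Arr2: "f \<in> Arr1 K \<Longrightarrow> id2 K f \<in> Arr2 K"
  and dom2_id2: "f \<in> Arr1 K \<Longrightarrow> dom2 K (id2 K f) = f"
  and cod2_id2: "f \<in> Arr1 K \<Longrightarrow> cod2 K (id2 K f) = f"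
  and vcmp_in_Arr2: "\<lbrakk>a \<in> Arr2 K; b \<in> Arr2 K; cod2 K a = dom2 K b\<rbrakk> \<Longrightarrow> vcmp K b a \<in> Arr2 K"
  and dom2_vcmp: "\<lbrakk>a \<in> Arr2 K; b \<in> Arr2 K; cod2 K a = dom2 K b\<rbrakk> \<Longrightarrow> dom2 K (vcmp K b a) = dom2 K a"
  and cod2_vcmp: "\<lbrakk>a \<in> Arr2 K; b \<in> Arr2 K; cod2 K a = dom2 K b\<rbrakk> \<Longrightarrow> cod2 K (vcmp K b a) = cod2 K b"
  and vcmp_assoc: "\<lbrakk>a \<in> Arr2 K; b \<in> Arr2 K; c \<in> Arr2 K; cod2 K a = dom2 K b; cod2 K b = dom2 K c\<rbrakk>
      \<Longrightarrow> vcmp K (vcmp K c b) a = vcmp K c (vcmp K b a)"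
  and vcmp_id2_left: "\<lbrakk>a \<in> Arr2 K; cod2 K a = f\<rbrakk> \<Longrightarrow> vcmp K (id2 K f) a = a"
  and vcmp_id2_right: "\<lbrakk>a \<in> Arr2 K; dom2 K a = f\<rbrakk> \<Longrightarrow> vcmp K a (id2 K f) = a"
  and hcmp_in_Arr2: "\<lbrakk>a \<in> Arr2 K; b \<in> Arr2 K; src1 K (dom2 K b) = trg1 K (dom2 K a)\<rbrakk>
      \<Longrightarrow> hcmp K b a \<in> Arr2 K"
  and dom2_hcmp: "\<lbrakk>a \<in> Arr2 K; b \<in> Arr2 K; src1 K (dom2 K b) = trg1 K (dom2 K a)\<rbrakk>
      \<Longrightarrow> dom2 K (hcmp K b a) = cmp1 K (dom2 K b) (dom2 K a)"
  and cod2_hcmp: "\<lbrakk>a \<in> Arr2 K; b \<in> Arr2 K; src1 K (dom2 K b) = trg1 K (dom2 K a)\<rbrakk>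
      \<Longrightarrow> cod2 K (hcmp K b a) = cmp1 K (cod2 K b) (cod2 K a)"
  and hcmp_assoc: "\<lbrakk>a \<in> Arr2 K; b \<in> Arr2 K; c \<in> Arr2 K;
      src1 K (dom2 K b) = trg1 K (dom2 K a); src1 K (dom2 K c) = trg1 K (dom2 K b)\<rbrakk>
      \<Longrightarrow> hcmp K c (hcmp K b a) = hcmp K (hcmp K c b) a"
  and hcmp_idc_left: "\<lbrakk>a \<in> Arr2 K; trg1 K (dom2 K a) = x\<rbrakk> \<Longrightarrow> hcmp K (id2 K (idc K x)) a = a"
  and hcmp_idc_right: "\<lbrakk>a \<in> Arr2 K; src1 K (dom2 K a) = x\<rbrakk> \<Longrightarrow> hcmp K a (id2 K (idc K x)) = a"
  and hcmp_id2: "\<lbrakk>f \<in> Arr1 K; g \<in> Arr1 K; src1 K g = trg1 K f\<rbrakk>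
      \<Longrightarrow> hcmp K (id2 K g) (id2 K f) = id2 K (cmp1 K g f)"
  and interchange: "\<lbrakk>a \<in> Arr2 K; a' \<in> Arr2 K; b \<in> Arr2 K; b' \<in> Arr2 K;
      cod2 K a = dom2 K a'; cod2 K b = dom2 K b'; src1 K (dom2 K b) = trg1 K (dom2 K a)\<rbrakk>
      \<Longrightarrow> hcmp K (vcmp K b' b) (vcmp K a' a) = vcmp K (hcmp K b' a') (hcmp K b a)"
  using two_category unfolding two_category_def by metis+

lemmas [simp] = src1_in_Ob trg1_in_Ob idc_in_Arr1 src1_idc trg1_idc
  cmp1_in_Arr1 src1_cmp1 trg1_cmp1 cmp1_assoc cmp1_idc_left cmp1_idc_right
  dom2_in_Arr1 cod2_in_Arr1 src1_cod2 trg1_cod2 id2_in_Arr2 dom2_id2 cod2_id2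
  vcmp_in_Arr2 dom2_vcmp cod2_vcmp vcmp_assoc vcmp_id2_left vcmp_id2_right
  hcmp_in_Arr2 dom2_hcmp cod2_hcmp

lemma wl_in_Arr2 [simp]:
  assumes "a \<in> Arr2 K" "V \<in> Arr1 K" "src1 K V = trg1 K (dom2 K a)"
  shows "wl K V a \<in> Arr2 K" "dom2 K (wl K V a) = cmp1 K V (dom2 K a)"
    "cod2 K (wl K V a) = cmp1 K V (cod2 K a)"
  using assms unfolding wl_def by simp_all

lemma wr_in_Arr2 [simp]:
  assumes "a \<in> Arr2 K" "V \<in> Arr1 K" "src1 K (dom2 K a) = trg1 K V"
  shows "wr K a V \<in> Arr2 K" "dom2 K (wr K a V) = cmp1 K (dom2 K a) V"
    "cod2 K (wr K a V) = cmp1 K (cod2 K a) V"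
  using assms unfolding wr_def by simp_all

lemma wl_vcmp [simp]:
  assumes "a \<in> Arr2 K" "b \<in> Arr2 K" "cod2 K a = dom2 K b" "V \<in> Arr1 K" "src1 K V = trg1 K (dom2 K a)"
  shows "wl K V (vcmp K b a) = vcmp K (wl K V b) (wl K V a)"
  using assms interchange[of a b "id2 K V" "id2 K V"] unfolding wl_def by simp

lemma wr_vcmp [simp]:
  assumes "a \<in> Arr2 K" "b \<in> Arr2 K" "cod2 K a = dom2 K b" "V \<in> Arr1 K" "src1 K (dom2 K a) = trg1 K V"
  shows "wr K (vcmp K b a) V = vcmp K (wr K b V) (wr K a V)"
  using assms interchange[of "id2 K V" "id2 K V" a b] unfolding wr_def by simp

lemma wl_id2 [simp]:
  "\<lbrakk>f \<in> Arr1 K; V \<in> Arr1 K; src1 K V = trg1 K f\<rbrakk> \<Longrightarrow> wl K V (id2 K f) = id2 K (cmp1 K V f)"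
  unfolding wl_def by (simp add: hcmp_id2)

lemma wr_id2 [simp]:
  "\<lbrakk>f \<in> Arr1 K; V \<in> Arr1 K; src1 K f = trg1 K V\<rbrakk> \<Longrightarrow> wr K (id2 K f) V = id2 K (cmp1 K f V)"
  unfolding wr_def by (simp add: hcmp_id2)

lemma wl_wl [simp]:
  assumes "a \<in> Arr2 K" "V \<in> Arr1 K" "U \<in> Arr1 K" "src1 K V = trg1 K (dom2 K a)" "src1 K U = trg1 K V"
  shows "wl K U (wl K V a) = wl K (cmp1 K U V) a"
  using assms hcmp_assoc[of a "id2 K V" "id2 K U"] unfolding wl_def by (simp add: hcmp_id2)

lemma wr_wr [simp]:
  assumes "a \<in> Arr2 K" "V \<in> Arr1 K" "U \<in> Arr1 K" "src1 K (dom2 K a) = trg1 K V" "src1 K V = trg1 K U"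
  shows "wr K (wr K a V) U = wr K a (cmp1 K V U)"
  using assms hcmp_assoc[of "id2 K U" "id2 K V" a] unfolding wr_def by (simp add: hcmp_id2)

lemma wl_wr [simp]:
  assumes "a \<in> Arr2 K" "V \<in> Arr1 K" "U \<in> Arr1 K"
    "src1 K (dom2 K a) = trg1 K U" "src1 K V = trg1 K (dom2 K a)"
  shows "wl K V (wr K a U) = wr K (wl K V a) U"
  using assms hcmp_assoc[of "id2 K U" a "id2 K V"] unfolding wl_def wr_def by simp

lemma wl_idc [simp]: "\<lbrakk>a \<in> Arr2 K; trg1 K (dom2 K a) = x\<rbrakk> \<Longrightarrow> wl K (idc K x) a = a"
  unfolding wl_def by (rule hcmp_idc_left)

lemma wr_idc [simp]: "\<lbrakk>a \<in> Arr2 K; src1 K (dom2 K a) = x\<rbrakk> \<Longrightarrow> wr K a (idc K x) = a"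
  unfolding wr_def by (rule hcmp_idc_right)

lemma whisker_exchange:
  assumes "a \<in> Arr2 K" "b \<in> Arr2 K" "src1 K (dom2 K a) = trg1 K (dom2 K b)"
  shows "vcmp K (wr K a (cod2 K b)) (wl K (dom2 K a) b)
    = vcmp K (wl K (cod2 K a) b) (wr K a (dom2 K b))"
proof -
  have "vcmp K (wr K a (cod2 K b)) (wl K (dom2 K a) b)
      = hcmp K (vcmp K a (id2 K (dom2 K a))) (vcmp K (id2 K (cod2 K b)) b)"
    using assms interchange[of b "id2 K (cod2 K b)" "id2 K (dom2 K a)" a] unfolding wl_def wr_def by simp
  also have "\<dots> = hcmp K (vcmp K (id2 K (cod2 K a)) a) (vcmp K b (id2 K (dom2 K b)))"
    using assms by simp
  also have "\<dots> = vcmp K (wl K (cod2 K a) b) (wr K a (dom2 K b))"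
    using assms interchange[of "id2 K (dom2 K b)" b a "id2 K (cod2 K a)"] unfolding wl_def wr_def by simp
  finally show ?thesis .
qed

text \<open>The simplifier normalises composites to right-nested form; these two lemmas turn an
  equation between such composites into a rewrite rule applying at the head of a longer one.\<close>

lemma vcmp_subst2:
  assumes "vcmp K b a = c" "a \<in> Arr2 K" "b \<in> Arr2 K" "cod2 K a = dom2 K b"
    "d \<in> Arr2 K" "cod2 K d = dom2 K a"
  shows "vcmp K b (vcmp K a d) = vcmp K c d"
  using assms by (metis vcmp_assoc)

lemma vcmp_subst3:
  assumes "vcmp K c (vcmp K b a) = e" "a \<in> Arr2 K" "b \<in> Arr2 K" "c \<in> Arr2 K"
    "cod2 K a = dom2 K b" "cod2 K b = dom2 K c" "d \<in> Arr2 K" "cod2 K d = dom2 K a"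
  shows "vcmp K c (vcmp K b (vcmp K a d)) = vcmp K e d"
  using assms by (metis vcmp_assoc vcmp_in_Arr2 dom2_vcmp cod2_vcmp)

end

locale em_1cell_target = two_cat K for K :: "('o, 'a, 'c) twocat" +
  fixes k k' :: 'o and t t' W :: 'a and mu eta mu' eta' phi :: 'c
  assumes monad: "monad K k t mu eta"
    and monad': "monad K k' t' mu' eta'"
    and em_1cell_W: "em_1cell K k t mu eta k' t' mu' eta' W phi"
begin

lemma cells_in_Arr [simp]:
  "k \<in> Ob K" "k' \<in> Ob K" "t \<in> Arr1 K" "t' \<in> Arr1 K" "W \<in> Arr1 K"
  "src1 K t = k" "trg1 K t = k" "src1 K t' = k'" "trg1 K t' = k'" "src1 K W = k" "trg1 K W = k'"
  "mu \<in> Arr2 K" "dom2 K mu = cmp1 K t t" "cod2 K mu = t"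
  "eta \<in> Arr2 K" "dom2 K eta = idc K k" "cod2 K eta = t"
  "mu' \<in> Arr2 K" "dom2 K mu' = cmp1 K t' t'" "cod2 K mu' = t'"
  "eta' \<in> Arr2 K" "dom2 K eta' = idc K k'" "cod2 K eta' = t'"
  "phi \<in> Arr2 K" "dom2 K phi = cmp1 K t' W" "cod2 K phi = cmp1 K W t"
  using monad monad' em_1cell_W unfolding monad_def em_1cell_def cell2_def by auto

lemma mu_assoc: "vcmp K mu (wr K mu t) = vcmp K mu (wl K t mu)"
  and mu'_eta'_left: "vcmp K mu' (wr K eta' t') = id2 K t'"
  and mu'_eta'_right: "vcmp K mu' (wl K t' eta') = id2 K t'"
  and phi_mu: "vcmp K (wl K W mu) (vcmp K (wr K phi t) (wl K t' phi)) = vcmp K phi (wr K mu' W)"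
  using monad monad' em_1cell_W unfolding monad_def em_1cell_def by auto

lemma eta'_natural [simp]:
  assumes "b \<in> Arr2 K" "trg1 K (dom2 K b) = k'" "cod2 K b = Y"
  shows "vcmp K (wr K eta' Y) b = vcmp K (wl K t' b) (wr K eta' (dom2 K b))"
  using whisker_exchange[of eta' b] assms by simp

lemma mu'_natural:
  assumes "x \<in> Arr2 K" "trg1 K (dom2 K x) = k'" "cod2 K x = Y"
  shows "vcmp K (wr K mu' Y) (wl K (cmp1 K t' t') x) = vcmp K (wl K t' x) (wr K mu' (dom2 K x))"
  using whisker_exchange[of mu' x] assms by simp

lemma mu'_natural_subst:
  assumes "x \<in> Arr2 K" "trg1 K (dom2 K x) = k'" "cod2 K x = Y"
    "d \<in> Arr2 K" "cod2 K d = cmp1 K t' (cmp1 K t' (dom2 K x))"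
  shows "vcmp K (wr K mu' Y) (vcmp K (wl K (cmp1 K t' t') x) d)
    = vcmp K (wl K t' x) (vcmp K (wr K mu' (dom2 K x)) d)"
  using vcmp_subst2[OF mu'_natural[OF assms(1,2) refl]] assms(1,2,4,5) unfolding assms(3)[symmetric]
  by simp

lemma mu'_eta'_left_wr [simp]:
  assumes "X \<in> Arr1 K" "trg1 K X = k'"
  shows "vcmp K (wr K mu' X) (wr K eta' (cmp1 K t' X)) = id2 K (cmp1 K t' X)"
proof -
  have "wr K (vcmp K mu' (wr K eta' t')) X = wr K (id2 K t') X" by (simp only: mu'_eta'_left)
  with assms show ?thesis by simp
qed

lemma mu'_eta'_right_wr [simp]:
  assumes "X \<in> Arr1 K" "trg1 K X = k'"
  shows "vcmp K (wr K mu' X) (wr K (wl K t' eta') X) = id2 K (cmp1 K t' X)"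
proof -
  have "wr K (vcmp K mu' (wl K t' eta')) X = wr K (id2 K t') X" by (simp only: mu'_eta'_right)
  with assms show ?thesis by simp
qed

lemma mu'_eta'_right_wr_subst [simp]:
  assumes "X \<in> Arr1 K" "trg1 K X = k'" "d \<in> Arr2 K" "cod2 K d = cmp1 K t' X"
  shows "vcmp K (wr K mu' X) (vcmp K (wr K (wl K t' eta') X) d) = d"
  using vcmp_subst2[OF mu'_eta'_right_wr[OF assms(1,2)]] assms by simp

lemma phi_mu_exchange:
  "vcmp K (wr K phi t) (wl K (cmp1 K t' W) mu) = vcmp K (wl K (cmp1 K W t) mu) (wr K phi (cmp1 K t t))"
  using whisker_exchange[of phi mu] by simp

lemma mu_assoc_W:
  "vcmp K (wl K W mu) (wl K (cmp1 K W t) mu) = vcmp K (wl K W mu) (wr K (wl K W mu) t)"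
proof -
  have "wl K W (vcmp K mu (wr K mu t)) = wl K W (vcmp K mu (wl K t mu))" by (simp only: mu_assoc)
  then show ?thesis by simp
qed

lemma phi_mu_t:
  "vcmp K (wr K (wl K W mu) t) (vcmp K (wr K phi (cmp1 K t t)) (wr K (wl K t' phi) t))
    = vcmp K (wr K phi t) (wr K mu' (cmp1 K W t))"
proof -
  have "wr K (vcmp K (wl K W mu) (vcmp K (wr K phi t) (wl K t' phi))) t
      = wr K (vcmp K phi (wr K mu' W)) t"
    by (simp only: phi_mu)
  then show ?thesis by simp
qed

lemmas monad_rewrites = vcmp_subst2[OF phi_mu_exchange] vcmp_subst2[OF mu_assoc_W]
  vcmp_subst3[OF phi_mu_t] mu'_natural mu'_natural_subst vcmp_subst3[OF phi_mu] phi_mu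

abbreviation proj :: "'c \<Rightarrow> 'c" where
  "proj y \<equiv> vcmp K (wl K W mu) (vcmp K (wr K phi t) (vcmp K (wr K eta' (cmp1 K W t)) y))"

abbreviation act :: "'c \<Rightarrow> 'c" where
  "act x \<equiv> vcmp K (wl K W mu) (vcmp K (wr K phi t) (wl K t' x))"

context
  fixes x X
  assumes x: "x \<in> Arr2 K" "dom2 K x = X" "cod2 K x = cmp1 K W t"
    and X: "X \<in> Arr1 K" "src1 K X = k" "trg1 K X = k'"
begin

lemma proj_eq_act_eta': "proj x = vcmp K (act x) (wr K eta' X)"
  using x X by simp

lemma proj_act: "proj (act x) = act x"
  using x X by (simp add: monad_rewrites)

lemma act_proj: "act (proj x) = act x"
  using x X by (simp add: monad_rewrites)

lemma mu_proj:
  assumes "d \<in> Arr2 K" "cod2 K d = cmp1 K X t" "trg1 K (dom2 K d) = k'"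
  shows "vcmp K (wl K W mu) (vcmp K (wr K (proj x) t) d)
    = proj (vcmp K (wl K W mu) (vcmp K (wr K x t) d))"
  using x X assms by (simp add: monad_rewrites)

end

end

locale em_1cell_pair = em_1cell_target +
  fixes V psi omega
  assumes em_1cell_V: "em_1cell K k t mu eta k' t' mu' eta' V psi"
    and omega: "cell2 K omega V W"
begin

lemma cells_in_Arr_V [simp]:
  "V \<in> Arr1 K" "src1 K V = k" "trg1 K V = k'"
  "psi \<in> Arr2 K" "dom2 K psi = cmp1 K t' V" "cod2 K psi = cmp1 K V t"
  "omega \<in> Arr2 K" "dom2 K omega = V" "cod2 K omega = W"
  using em_1cell_V omega unfolding em_1cell_def cell2_def by auto

lemma psi_mu: "vcmp K (wl K V mu) (vcmp K (wr K psi t) (wl K t' psi)) = vcmp K psi (wr K mu' V)"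
  using em_1cell_V unfolding em_1cell_def by auto

lemma em_2cell_iff:
  assumes "cell2 K rho V (cmp1 K W t)"
  shows "em_2cell K t mu eta t' mu' eta' V psi W phi rho
    \<longleftrightarrow> vcmp K (wl K W mu) (vcmp K (wr K rho t) psi) = act rho \<and> rho = proj rho"
  using assms unfolding em_2cell_def cell2_def by simp

abbreviation omega_psi :: 'c where
  "omega_psi \<equiv> vcmp K (wr K omega t) psi"

abbreviation phi_omega :: 'c where
  "phi_omega \<equiv> vcmp K phi (wl K t' omega)"

abbreviation omega_psi_eta :: 'c where
  "omega_psi_eta \<equiv> vcmp K (wr K omega t) (vcmp K psi (wr K eta' V))"

abbreviation phi_eta_omega :: 'c where
  "phi_eta_omega \<equiv> vcmp K phi (vcmp K (wr K eta' W) omega)"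

lemma omega_psi_eta_eq: "omega_psi_eta = vcmp K omega_psi (wr K eta' V)"
  by simp

lemma phi_eta_omega_eq: "phi_eta_omega = vcmp K phi_omega (wr K eta' V)"
  by simp

lemma mu_omega_psi_eta: "vcmp K (wl K W mu) (vcmp K (wr K omega_psi_eta t) psi) = omega_psi"
proof -
  have exch: "vcmp K (wl K W mu) (wr K omega (cmp1 K t t)) = vcmp K (wr K omega t) (wl K V mu)"
    using whisker_exchange[of omega mu] by simp
  show ?thesis by (simp add: vcmp_subst2[OF exch] vcmp_subst3[OF psi_mu])
qed

lemma mu_phi_eta_omega: "vcmp K (wl K W mu) (vcmp K (wr K phi_eta_omega t) psi) = proj omega_psi"
  by simp

lemma act_phi_eta_omega: "act phi_eta_omega = phi_omega"
  by (simp add: monad_rewrites)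

lemma proj_phi_omega: "proj phi_omega = phi_omega"
  by (simp add: monad_rewrites)

lemma omega_psi_eta_cell: "cell2 K omega_psi_eta V (cmp1 K W t)"
  by (simp add: cell2_def)

lemma phi_eta_omega_cell: "cell2 K phi_eta_omega V (cmp1 K W t)"
  by (simp add: cell2_def)

lemma proj_omega_psi_eta: "proj omega_psi_eta = vcmp K (proj omega_psi) (wr K eta' V)"
  by simp

lemma proj_phi_eta_omega: "proj phi_eta_omega = phi_eta_omega"
  by (simp add: monad_rewrites)

lemma act_omega_psi_eta_distrib:
  "act omega_psi_eta = vcmp K (wl K W mu) (vcmp K (wr K phi t) (vcmp K (wl K t' (wr K omega t))
     (vcmp K (wl K t' psi) (wl K t' (wr K eta' V)))))"
  by simp

lemma act_proj_omega_psi_eta: "act (proj omega_psi_eta) = act omega_psi_eta"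
  by (rule act_proj[of omega_psi_eta V]) simp_all

lemma em_2cell_omega_psi_eta_iff:
  "em_2cell K t mu eta t' mu' eta' V psi W phi omega_psi_eta \<longleftrightarrow> omega_psi = act omega_psi_eta"
proof -
  have "proj omega_psi_eta = vcmp K (act omega_psi_eta) (wr K eta' V)"
    by (rule proj_eq_act_eta'[of omega_psi_eta V]) simp_all
  then show ?thesis
    using em_2cell_iff[OF omega_psi_eta_cell] mu_omega_psi_eta omega_psi_eta_eq by metis
qed

lemma em_2cell_omega_psi_eta_iff':
  "em_2cell K t mu eta t' mu' eta' V psi W phi omega_psi_eta
    \<longleftrightarrow> proj omega_psi_eta = omega_psi_eta \<and> proj omega_psi = act omega_psi_eta"
proof
  assume "em_2cell K t mu eta t' mu' eta' V psi W phi omega_psi_eta"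
  moreover have "proj (act omega_psi_eta) = act omega_psi_eta"
    by (rule proj_act[of omega_psi_eta V]) simp_all
  ultimately show "proj omega_psi_eta = omega_psi_eta \<and> proj omega_psi = act omega_psi_eta"
    using em_2cell_iff[OF omega_psi_eta_cell] em_2cell_omega_psi_eta_iff by metis
next
  assume fixed: "proj omega_psi_eta = omega_psi_eta \<and> proj omega_psi = act omega_psi_eta"
  have "omega_psi = vcmp K (wl K W mu) (vcmp K (wr K omega_psi_eta t) psi)"
    using mu_omega_psi_eta by simp
  also have "\<dots> = vcmp K (wl K W mu) (vcmp K (wr K (proj omega_psi_eta) t) psi)"
    using fixed by simp
  also have "\<dots> = proj (vcmp K (wl K W mu) (vcmp K (wr K omega_psi_eta t) psi))"
    by (rule mu_proj[of omega_psi_eta V]) simp_all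
  also have "\<dots> = proj omega_psi"
    by (simp only: mu_omega_psi_eta)
  finally show "em_2cell K t mu eta t' mu' eta' V psi W phi omega_psi_eta"
    using fixed em_2cell_omega_psi_eta_iff by metis
qed

lemma em_2cell_phi_eta_omega_iff:
  "em_2cell K t mu eta t' mu' eta' V psi W phi phi_eta_omega \<longleftrightarrow> phi_omega = proj omega_psi"
  using em_2cell_iff[OF phi_eta_omega_cell] mu_phi_eta_omega act_phi_eta_omega proj_phi_eta_omega
  by metis

lemma em_2cell_phi_eta_omega_iff':
  "em_2cell K t mu eta t' mu' eta' V psi W phi phi_eta_omega
    \<longleftrightarrow> proj omega_psi_eta = phi_eta_omega \<and> proj omega_psi = act omega_psi_eta"
  using em_2cell_phi_eta_omega_iff proj_omega_psi_eta phi_eta_omega_eq act_phi_eta_omega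
    act_proj_omega_psi_eta by metis

lemma phi_omega_eq_omega_psi_iff:
  "phi_omega = omega_psi \<longleftrightarrow>
    em_2cell K t mu eta t' mu' eta' V psi W phi phi_eta_omega
    \<and> em_2cell K t mu eta t' mu' eta' V psi W phi omega_psi_eta"
proof -
  have "proj (act omega_psi_eta) = act omega_psi_eta"
    by (rule proj_act[of omega_psi_eta V]) simp_all
  then show ?thesis
    using em_2cell_omega_psi_eta_iff em_2cell_phi_eta_omega_iff omega_psi_eta_eq phi_eta_omega_eq
      act_phi_eta_omega proj_phi_omega by metis
qed

end

theorem lemma1p2:
  fixes K :: "('o, 'a, 'c) twocat"
    and k k' :: 'o and t t' V W :: 'a and mu eta mu' eta' psi phi omega :: 'c
  assumes K: "two_category K"
    and M: "monad K k t mu eta"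
    and M': "monad K k' t' mu' eta'"
    and V: "em_1cell K k t mu eta k' t' mu' eta' V psi"
    and W: "em_1cell K k t mu eta k' t' mu' eta' W phi"
    and om: "cell2 K omega V W"
  shows
   "(em_2cell K t mu eta t' mu' eta' V psi W phi
        (vcmp K (wr K omega t) (vcmp K psi (wr K eta' V)))
     \<longleftrightarrow>
     vcmp K (wr K omega t) psi =
       vcmp K (wl K W mu) (vcmp K (wr K phi t) (vcmp K (wl K t' (wr K omega t))
         (vcmp K (wl K t' psi) (wl K t' (wr K eta' V))))))
  \<and>
   (em_2cell K t mu eta t' mu' eta' V psi W phi
        (vcmp K (wr K omega t) (vcmp K psi (wr K eta' V)))
     \<longleftrightarrow>
     (vcmp K (wl K W mu) (vcmp K (wr K phi t) (vcmp K (wr K eta' (cmp1 K W t))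
         (vcmp K (wr K omega t) (vcmp K psi (wr K eta' V)))))
        = vcmp K (wr K omega t) (vcmp K psi (wr K eta' V))
      \<and>
      vcmp K (wl K W mu) (vcmp K (wr K phi t) (vcmp K (wr K eta' (cmp1 K W t))
         (vcmp K (wr K omega t) psi)))
        = vcmp K (wl K W mu) (vcmp K (wr K phi t) (vcmp K (wl K t' (wr K omega t))
         (vcmp K (wl K t' psi) (wl K t' (wr K eta' V)))))))
  \<and>
   (em_2cell K t mu eta t' mu' eta' V psi W phi
        (vcmp K phi (vcmp K (wr K eta' W) omega))
     \<longleftrightarrow>
     vcmp K phi (wl K t' omega) =
       vcmp K (wl K W mu) (vcmp K (wr K phi t) (vcmp K (wr K eta' (cmp1 K W t))
         (vcmp K (wr K omega t) psi))))
  \<and>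
   (em_2cell K t mu eta t' mu' eta' V psi W phi
        (vcmp K phi (vcmp K (wr K eta' W) omega))
     \<longleftrightarrow>
     (vcmp K (wl K W mu) (vcmp K (wr K phi t) (vcmp K (wr K eta' (cmp1 K W t))
         (vcmp K (wr K omega t) (vcmp K psi (wr K eta' V)))))
        = vcmp K phi (vcmp K (wr K eta' W) omega)
      \<and>
      vcmp K (wl K W mu) (vcmp K (wr K phi t) (vcmp K (wr K eta' (cmp1 K W t))
         (vcmp K (wr K omega t) psi)))
        = vcmp K (wl K W mu) (vcmp K (wr K phi t) (vcmp K (wl K t' (wr K omega t))
         (vcmp K (wl K t' psi) (wl K t' (wr K eta' V)))))))
  \<and>
   (vcmp K phi (wl K t' omega) = vcmp K (wr K omega t) psi
     \<longleftrightarrow>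
     em_2cell K t mu eta t' mu' eta' V psi W phi
        (vcmp K phi (vcmp K (wr K eta' W) omega))
     \<and> em_2cell K t mu eta t' mu' eta' V psi W phi
        (vcmp K (wr K omega t) (vcmp K psi (wr K eta' V))))
  \<and>
   (vcmp K phi (wl K t' omega) = vcmp K (wr K omega t) psi \<longrightarrow>
     vcmp K phi (vcmp K (wr K eta' W) omega) = vcmp K (wr K omega t) (vcmp K psi (wr K eta' V)))"
proof -
  interpret em_1cell_pair K k k' t t' W mu eta mu' eta' phi V psi omega
    by unfold_locales (fact K M M' W V om)+
  show ?thesis
    using em_2cell_omega_psi_eta_iff em_2cell_omega_psi_eta_iff' em_2cell_phi_eta_omega_iff
      em_2cell_phi_eta_omega_iff' phi_omega_eq_omega_psi_iff phi_eta_omega_eq omega_psi_eta_eq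
    unfolding act_omega_psi_eta_distrib by metis
qed

end
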